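(* Assume (A0). Let $(s,t) \in \Delta_J$ and $f \in Y_1$. Then on $\Omega$, for every $\epsilon\in(0,1]$, \[ V_\epsilon(s,t)f=f+\int_s^t V_\epsilon(s,u)A_{x (u^{1/\epsilon,s})}(u)f\, du+\sum_{k=1}^{N_s (t^{1/\epsilon,s})} V_\epsilon(s,T_k^{\epsilon,s}(s)^-) [D^\epsilon(x_{k-1}(s),x_k(s))-I]f , \] where $V_\epsilon(s,r^-)f=\lim_{u\uparrow r}V_\epsilon(s,u)f$.
   Context: Banach spaces: $(Y,\|\cdot\|)$ real separable, $(Y_1,\|\cdot\|_{Y_1})$ real separable continuously embedded in $Y$. $J$ is $\mathbb{R}^+$ or $[0,T_\infty]$, $\Delta_J=\{(s,t)\in J^2:s\le t\}$, $J(s)=\{t\in J:t\ge s\}$. An inhomogeneous $Y$-semigroup is $\Gamma:\Delta_J\to\mathcal B(Y)$ with $\Gamma(t,t)=I$, $\Gamma(s,r)\Gamma(r,t)=\Gamma(s,t)$; its generator $A_\Gamma(t)f$ is the common value of $\lim_{h\downarrow0}h^{-1}(\Gamma(t,t+h)-I)f$ and $\lim_{h\downarrow0}h^{-1}(\Gamma(t-h,t)-I)f$ on the set $\mathcal D(A_\Gamma(t))$ where both exist and agree, $\mathcal D(A_\Gamma)=\bigcap_t\mathcal D(A_\Gamma(t))$. $\Gamma$ is regular if $Y_1\subseteq\mathcal D(A_\Gamma)$, $\Gamma(s,t)Y_1\subseteq Y_1$ and $u\mapsto\Gamma(u,t)f$ is $\|\cdot\|_{Y_1}$-continuous for $f\in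 Y_1$, $u\mapsto\Gamma(s,u)f$ is $Y$-continuous for $f\in Y$, and $u\mapsto\Gamma(s,u)A_\Gamma(u)f$ is Bochner integrable on $[s,t]$ for $f\in Y_1$. Probabilistic setting: $(\Omega,\mathcal F,\mathbb P)$ complete; $X$ finite; $(x_n,T_n)_{n\ge0}$ a Markov renewal process ($x_n\in X$, $T_0=0<T_1<\dots$) with semi-Markov kernel $Q$; $N(t)=\sup\{n:T_n\le t\}$ (finite everywhere after restricting $\Omega$ to a full-measure event); $x(t)=x_{N(t)}$; $N_s(t)=N(t)-N(s)$, $T_0(s)=s$, $T_n(s)=T_{N(s)+n}$ ($n\ge1$), $x_n(s)=x(T_n(s))$. $(\Gamma_x)_{x\in X}$ are inhomogeneous $Y$-semigroups with generators $A_x$ (jointly measurable in $(r,t,x,f)$). $(D^\epsilon(x,y))_{x,y\in X,\epsilon\in(0,1]}\subseteq\mathcal B(Y)$ with $(x,y,f)\mapsto D^\epsilon(x,y)f$ measurable, and $D^0(x,y):=I$. $\mathcal D(D_1)$ is the set of $f\in Y$ such that for all $\epsilon\in[0,1]$, $x,y$, the derivative $D^\epsilon_1(x,y)f:=\lim_{h\to0,\epsilon+h\in[0,1]}h^{-1}(D^{\epsilon+h}(x,y)f-D^\epsilon(x,y)f)$ exists in $Y$; $\mathcal D(D_2)$, $D^\epsilon_2$ likewise for the second derivative in $\epsilon$. For $f\in\bigcap_x\mathcal D(A_x)$ with $A_x(t)f\in Y_1$ for all $t$, $A'_x(t)f$ denotes the $\|\cdot\|_{Y_1}$-limit of $h^{-1}(A_x(t+h)f-A_x(t)f)$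 and $\mathcal D(A'_x)$ the set where it exists in $Y_1$ for all $t$. (A0) is the following set of assumptions: (a) $Y_1\subseteq\mathcal D(D_1)$; (b) every $\Gamma_x$ is regular; (c) for every $x$ and $f\in Y_1$, $t\mapsto A_x(t)f$ is continuous into $Y$; (d) there is $\bar\tau>0$ with $Q(x,y,(\bar\tau,\infty))=0$ for all $x,y$; (e) all $\Gamma_x(s,t)$ and $D^\epsilon(x,y)$ have $\mathcal B(Y)$-norm at most $1$; (f) $A_x(t)\in\mathcal B(Y_1,Y)$ and $\sup_{u\in J}\|A_x(u)\|_{\mathcal B(Y_1,Y)}<\infty$ for all $x$; (g) $\sup_{u,x}\|A'_x(u)f\|<\infty$ and $\sup_{u,x}\|A_x(u)f\|_{Y_1}<\infty$ for all $f\in\bigcap_x\mathcal D(A'_x)$; (h) $\sup_{\epsilon\in[0,1],x,y}\|D^\epsilon_1(x,y)f\|<\infty$ for $f\in\mathcal D(D_1)$; (i) $\sup_{\epsilon\in[0,1],x,y}\|D^\epsilon_2(x,y)f\|<\infty$ for $f\in\mathcal D(D_2)$. With $t^{\epsilon,s}=s+\epsilon(t-s)$ (so $t^{1/\epsilon,s}=s+(t-s)/\epsilon$) and $T^{\epsilon,s}_k(s)=s+\epsilon(T_k(s)-s)$, $V_\epsilon(s,t)=\big[\prod_{k=1}^{N_s(t^{1/\epsilon,s})}\Gamma_{x_{k-1}(s)}(T^{\epsilon,s}_{k-1}(s),T^{\epsilon,s}_k(s))D^\epsilon(x_{k-1}(s),x_k(s))\big]\Gamma_{x(t^{1/\epsilon,s})}(T^{\epsilon,s}_{N_s(t^{1/\epsilon,s})}(s),t)$,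 product ordered left to right, empty product $I$. *)

theory Defs
  imports "HOL-Probability.Probability"
begin

definition time_set :: "real set \<Rightarrow> bool" where
  "time_set J \<longleftrightarrow> J = {0..} \<or> (\<exists>Tinf>0. J = {0..Tinf})"


definition inh_semigroup :: "real set \<Rightarrow> (real \<Rightarrow> real \<Rightarrow> ('y::real_normed_vector \<Rightarrow>\<^sub>L 'y)) \<Rightarrow> bool" where
  "inh_semigroup J \<Gamma> \<longleftrightarrow> (\<forall>t\<in>J. \<Gamma> t t = id_blinfun) \<and>
     (\<forall>s\<in>J. \<forall>r\<in>J. \<forall>t\<in>J. s \<le> r \<longrightarrow> r \<le> t \<longrightarrow> \<Gamma> s r o\<^sub>L \<Gamma> r t = \<Gamma> s t)"

text \<open>Right and left difference quotients; the increments h are restricted to those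
  for which the time arguments stay in J (at an endpoint of J one of the two filters is trivial,
  so only the meaningful one-sided limit is required there).\<close>

definition gen_lim :: "real set \<Rightarrow> (real \<Rightarrow> real \<Rightarrow> ('y::real_normed_vector \<Rightarrow>\<^sub>L 'y)) \<Rightarrow> real \<Rightarrow> 'y \<Rightarrow> 'y \<Rightarrow> bool" where
  "gen_lim J \<Gamma> t f g \<longleftrightarrow>
     ((\<lambda>h. (1 / h) *\<^sub>R (\<Gamma> t (t + h) f - f)) \<longlongrightarrow> g) (at 0 within {h. 0 < h \<and> t + h \<in> J}) \<and>
     ((\<lambda>h. (1 / h) *\<^sub>R (\<Gamma> (t - h) t f - f)) \<longlongrightarrow> g) (at 0 within {h. 0 < h \<and> t - h \<in> J})"

definition gen_dom :: "real set \<Rightarrow> (real \<Rightarrow> real \<Rightarrow> ('y::real_normed_vector \<Rightarrow>\<^sub>L 'y)) \<Rightarrow> real \<Rightarrow> 'y set" where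
  "gen_dom J \<Gamma> t = {f. \<exists>g. gen_lim J \<Gamma> t f g}"

definition gen :: "real set \<Rightarrow> (real \<Rightarrow> real \<Rightarrow> ('y::real_normed_vector \<Rightarrow>\<^sub>L 'y)) \<Rightarrow> real \<Rightarrow> 'y \<Rightarrow> 'y" where
  "gen J \<Gamma> t f = (THE g. gen_lim J \<Gamma> t f g)"

definition gen_dom_all :: "real set \<Rightarrow> (real \<Rightarrow> real \<Rightarrow> ('y::real_normed_vector \<Rightarrow>\<^sub>L 'y)) \<Rightarrow> 'y set" where
  "gen_dom_all J \<Gamma> = (\<Inter>t\<in>J. gen_dom J \<Gamma> t)"

text \<open>Y1 is modelled as a Banach space 'z together with a continuous linear injective
  embedding iota : Y1 -> Y; "f in Y1" means "f in range iota", and the Y1-norm of such f is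
  norm (inv iota f).\<close>

definition regular :: "real set \<Rightarrow> ('z::real_normed_vector \<Rightarrow>\<^sub>L 'y::{real_normed_vector,second_countable_topology}) \<Rightarrow> (real \<Rightarrow> real \<Rightarrow> ('y \<Rightarrow>\<^sub>L 'y)) \<Rightarrow> bool" where
  "regular J \<iota> \<Gamma> \<longleftrightarrow>
     range \<iota> \<subseteq> gen_dom_all J \<Gamma> \<and>
     (\<forall>s\<in>J. \<forall>t\<in>J. s \<le> t \<longrightarrow> \<Gamma> s t ` range \<iota> \<subseteq> range \<iota>) \<and>
     (\<forall>t\<in>J. \<forall>g. continuous_on {u\<in>J. u \<le> t} (\<lambda>u. inv \<iota> (\<Gamma> u t (\<iota> g)))) \<and>
     (\<forall>s\<in>J. \<forall>f. continuous_on {u\<in>J. s \<le> u} (\<lambda>u. \<Gamma> s u f)) \<and>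
     (\<forall>s\<in>J. \<forall>t\<in>J. s \<le> t \<longrightarrow> (\<forall>g. set_integrable lborel {s..t} (\<lambda>u. \<Gamma> s u (gen J \<Gamma> u (\<iota> g)))))"

definition D1_dom :: "(real \<Rightarrow> 'x \<Rightarrow> 'x \<Rightarrow> ('y::real_normed_vector \<Rightarrow>\<^sub>L 'y)) \<Rightarrow> 'y set" where
  "D1_dom D = {f. \<forall>\<epsilon>\<in>{0..1}. \<forall>x y. \<exists>L.
      ((\<lambda>h. (1 / h) *\<^sub>R (D (\<epsilon> + h) x y f - D \<epsilon> x y f)) \<longlongrightarrow> L) (at 0 within {h. \<epsilon> + h \<in> {0..1}})}"

definition D1 :: "(real \<Rightarrow> 'x \<Rightarrow> 'x \<Rightarrow> ('y::real_normed_vector \<Rightarrow>\<^sub>L 'y)) \<Rightarrow> real \<Rightarrow> 'x \<Rightarrow> 'x \<Rightarrow> 'y \<Rightarrow> 'y" where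
  "D1 D \<epsilon> x y f = Lim (at 0 within {h. \<epsilon> + h \<in> {0..1}}) (\<lambda>h. (1 / h) *\<^sub>R (D (\<epsilon> + h) x y f - D \<epsilon> x y f))"

definition D2_dom :: "(real \<Rightarrow> 'x \<Rightarrow> 'x \<Rightarrow> ('y::real_normed_vector \<Rightarrow>\<^sub>L 'y)) \<Rightarrow> 'y set" where
  "D2_dom D = {f \<in> D1_dom D. \<forall>\<epsilon>\<in>{0..1}. \<forall>x y. \<exists>L.
      ((\<lambda>h. (1 / h) *\<^sub>R (D1 D (\<epsilon> + h) x y f - D1 D \<epsilon> x y f)) \<longlongrightarrow> L) (at 0 within {h. \<epsilon> + h \<in> {0..1}})}"

definition D2 :: "(real \<Rightarrow> 'x \<Rightarrow> 'x \<Rightarrow> ('y::real_normed_vector \<Rightarrow>\<^sub>L 'y)) \<Rightarrow> real \<Rightarrow> 'x \<Rightarrow> 'x \<Rightarrow> 'y \<Rightarrow> 'y" where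
  "D2 D \<epsilon> x y f = Lim (at 0 within {h. \<epsilon> + h \<in> {0..1}}) (\<lambda>h. (1 / h) *\<^sub>R (D1 D (\<epsilon> + h) x y f - D1 D \<epsilon> x y f))"

definition Ader_dom :: "real set \<Rightarrow> ('z::real_normed_vector \<Rightarrow>\<^sub>L 'y::real_normed_vector) \<Rightarrow> ('x \<Rightarrow> real \<Rightarrow> real \<Rightarrow> ('y \<Rightarrow>\<^sub>L 'y)) \<Rightarrow> 'x \<Rightarrow> 'y set" where
  "Ader_dom J \<iota> \<Gamma>s x = {f. (\<forall>y. f \<in> gen_dom_all J (\<Gamma>s y)) \<and>
      (\<forall>t\<in>J. gen J (\<Gamma>s x) t f \<in> range \<iota>) \<and>
      (\<forall>t\<in>J. \<exists>L. ((\<lambda>h. (1 / h) *\<^sub>R (inv \<iota> (gen J (\<Gamma>s x) (t + h) f) - inv \<iota> (gen J (\<Gamma>s x) t f))) \<longlongrightarrow> L)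
                    (at 0 within {h. t + h \<in> J}))}"

definition Ader :: "real set \<Rightarrow> ('z::real_normed_vector \<Rightarrow>\<^sub>L 'y::real_normed_vector) \<Rightarrow> ('x \<Rightarrow> real \<Rightarrow> real \<Rightarrow> ('y \<Rightarrow>\<^sub>L 'y)) \<Rightarrow> 'x \<Rightarrow> real \<Rightarrow> 'y \<Rightarrow> 'z" where
  "Ader J \<iota> \<Gamma>s x t f = Lim (at 0 within {h. t + h \<in> J})
      (\<lambda>h. (1 / h) *\<^sub>R (inv \<iota> (gen J (\<Gamma>s x) (t + h) f) - inv \<iota> (gen J (\<Gamma>s x) t f)))"

definition semi_markov_kernel :: "('x::finite \<Rightarrow> 'x \<Rightarrow> real measure) \<Rightarrow> bool" where
  "semi_markov_kernel Q \<longleftrightarrow>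
     (\<forall>x y. finite_measure (Q x y) \<and> sets (Q x y) = sets borel \<and> emeasure (Q x y) {..0} = 0) \<and>
     (\<forall>x. (\<Sum>y\<in>UNIV. measure (Q x y) (space (Q x y))) = 1)"

text \<open>(x_n, T_n) is a Markov renewal process with semi-Markov kernel Q, expressed through its
  finite-dimensional distributions:
  P(x_0 = y_0, x_k = y_k, T_k - T_(k-1) <= t_k for 1<=k<=n) = P(x_0 = y_0) * prod_k Q(y_(k-1), y_k, [0, t_k]).\<close>
definition markov_renewal :: "'a measure \<Rightarrow> (nat \<Rightarrow> 'a \<Rightarrow> 'x::finite) \<Rightarrow> (nat \<Rightarrow> 'a \<Rightarrow> real) \<Rightarrow> ('x \<Rightarrow> 'x \<Rightarrow> real measure) \<Rightarrow> bool" where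
  "markov_renewal M xs Ts Q \<longleftrightarrow>
     prob_space M \<and> semi_markov_kernel Q \<and>
     (\<forall>n. xs n \<in> measurable M (count_space UNIV) \<and> Ts n \<in> borel_measurable M) \<and>
     (\<forall>\<omega>\<in>space M. Ts 0 \<omega> = 0 \<and> (\<forall>n. Ts n \<omega> < Ts (Suc n) \<omega>)) \<and>
     (\<forall>n (ys :: nat \<Rightarrow> 'x) (ts :: nat \<Rightarrow> real).
        measure M {\<omega>\<in>space M. \<forall>k\<le>n. xs k \<omega> = ys k \<and> (0 < k \<longrightarrow> Ts k \<omega> - Ts (k - 1) \<omega> \<le> ts k)}
        = measure M {\<omega>\<in>space M. xs 0 \<omega> = ys 0} *
          (\<Prod>k\<in>{1..n}. measure (Q (ys (k - 1)) (ys k)) {..ts k}))"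

definition cnt :: "(nat \<Rightarrow> real) \<Rightarrow> real \<Rightarrow> nat" where
  "cnt T t = (GREATEST n. T n \<le> t)"

definition xpath :: "(nat \<Rightarrow> 'x) \<Rightarrow> (nat \<Rightarrow> real) \<Rightarrow> real \<Rightarrow> 'x" where
  "xpath X T t = X (cnt T t)"

definition Ns :: "(nat \<Rightarrow> real) \<Rightarrow> real \<Rightarrow> real \<Rightarrow> nat" where
  "Ns T s t = cnt T t - cnt T s"

definition Tks :: "(nat \<Rightarrow> real) \<Rightarrow> real \<Rightarrow> nat \<Rightarrow> real" where
  "Tks T s k = (if k = 0 then s else T (cnt T s + k))"

definition xks :: "(nat \<Rightarrow> 'x) \<Rightarrow> (nat \<Rightarrow> real) \<Rightarrow> real \<Rightarrow> nat \<Rightarrow> 'x" where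
  "xks X T s k = xpath X T (Tks T s k)"

definition tscale :: "real \<Rightarrow> real \<Rightarrow> real \<Rightarrow> real" where
  "tscale \<epsilon> s t = s + \<epsilon> * (t - s)"

definition Tkse :: "(nat \<Rightarrow> real) \<Rightarrow> real \<Rightarrow> real \<Rightarrow> nat \<Rightarrow> real" where
  "Tkse T \<epsilon> s k = s + \<epsilon> * (Tks T s k - s)"

text \<open>V_epsilon(s,t): ordered product (left to right) of the factors
  Gamma_{x_(k-1)(s)}(T^eps_(k-1), T^eps_k) D^eps(x_(k-1)(s), x_k(s)), k = 1..N_s(t^{1/eps,s}),
  followed by Gamma_{x(t^{1/eps,s})}(T^eps_N, t).\<close>
definition Vop :: "('x \<Rightarrow> real \<Rightarrow> real \<Rightarrow> ('y::real_normed_vector \<Rightarrow>\<^sub>L 'y)) \<Rightarrow> (real \<Rightarrow> 'x \<Rightarrow> 'x \<Rightarrow> ('y \<Rightarrow>\<^sub>L 'y))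
     \<Rightarrow> (nat \<Rightarrow> 'x) \<Rightarrow> (nat \<Rightarrow> real) \<Rightarrow> real \<Rightarrow> real \<Rightarrow> real \<Rightarrow> ('y \<Rightarrow>\<^sub>L 'y)" where
  "Vop \<Gamma>s D X T \<epsilon> s t =
     (let n = Ns T s (tscale (1 / \<epsilon>) s t) in
      foldr (\<lambda>k acc. \<Gamma>s (xks X T s (k - 1)) (Tkse T \<epsilon> s (k - 1)) (Tkse T \<epsilon> s k)
                       o\<^sub>L D \<epsilon> (xks X T s (k - 1)) (xks X T s k) o\<^sub>L acc)
            [1..<Suc n]
            (\<Gamma>s (xpath X T (tscale (1 / \<epsilon>) s t)) (Tkse T \<epsilon> s n) t))"

end

theory Submission
  imports Defs
begin

text \<open>Along a fixed renewal path the evolution is piecewise a single semigroup: on the \<open>k\<close>-th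
  rescaled renewal interval \<open>[\<tau> k, \<tau> (k+1))\<close> one has \<open>V u = P k \<circ> \<Gamma>_(xk k) (\<tau> k) u\<close>, where
  \<open>P k\<close> is the ordered product of the first \<open>k\<close> factors \<open>\<Gamma> \<circ> D\<close>. For a regular contraction
  semigroup, \<open>u \<mapsto> \<Gamma> r u f\<close> has derivative \<open>\<Gamma> r u (A u f)\<close>, so by the fundamental theorem of
  calculus the drift integral over a piece \<open>[\<tau> k, b]\<close> is \<open>P k (\<Gamma> (\<tau> k) b f - f)\<close>. The left limit
  of \<open>V\<close> at \<open>\<tau> (k+1)\<close> is \<open>P k \<circ> \<Gamma> (\<tau> k) (\<tau> (k+1))\<close>, and since
  \<open>P (k+1) = P k \<circ> \<Gamma> (\<tau> k) (\<tau> (k+1)) \<circ> D\<close>, adding the jump terms to the drift integrals makes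
  the sum over all pieces telescope to \<open>V t f - f\<close>.\<close>

section \<open>Bochner integrals over compact intervals\<close>

lemma has_vector_derivative_iff_difference_quotient:
  fixes f :: "real \<Rightarrow> 'a::real_normed_vector"
  shows "(f has_vector_derivative f') (at x within S) \<longleftrightarrow>
    ((\<lambda>y. (1 / (y - x)) *\<^sub>R (f y - f x)) \<longlongrightarrow> f') (at x within S)"
proof -
  have "\<forall>\<^sub>F y in at x within S. norm (f y - f x - (y - x) *\<^sub>R f') / norm (y - x)
          = norm ((1 / (y - x)) *\<^sub>R (f y - f x) - f')"
  proof (rule eventually_at_filter[THEN iffD2, OF always_eventually], intro allI impI)
    fix y assume "y \<noteq> x"
    then have "(1 / (y - x)) *\<^sub>R (f y - f x) - f' = (1 / (y - x)) *\<^sub>R (f y - f x - (y - x) *\<^sub>R f')"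
      by (simp add: scaleR_diff_right)
    then show "norm (f y - f x - (y - x) *\<^sub>R f') / norm (y - x) = norm ((1 / (y - x)) *\<^sub>R (f y - f x) - f')"
      by (simp add: divide_inverse mult.commute)
  qed
  then show ?thesis
    unfolding has_vector_derivative_def has_derivative_iff_norm
    by (simp add: bounded_linear_scaleR_left tendsto_cong tendsto_norm_zero_iff Lim_null[symmetric])
qed

lemma tendsto_blinfun_apply_bounded:
  fixes G :: "'b \<Rightarrow> 'a::real_normed_vector \<Rightarrow>\<^sub>L 'c::real_normed_vector"
  assumes bound: "\<forall>\<^sub>F u in F. norm (G u) \<le> C"
    and a: "(a \<longlongrightarrow> a0) F" and Ga0: "((\<lambda>u. G u a0) \<longlongrightarrow> L) F"
  shows "((\<lambda>u. G u (a u)) \<longlongrightarrow> L) F"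
proof -
  have "((\<lambda>u. G u (a u - a0)) \<longlongrightarrow> 0) F"
  proof (rule Lim_null_comparison)
    show "\<forall>\<^sub>F u in F. norm (G u (a u - a0)) \<le> C * norm (a u - a0)"
      using bound by eventually_elim
        (metis norm_blinfun mult_right_mono norm_ge_zero order_trans)
    show "((\<lambda>u. C * norm (a u - a0)) \<longlongrightarrow> 0) F"
      using tendsto_mult_right_zero[OF tendsto_norm_zero[OF LIM_zero[OF a]]] .
  qed
  from tendsto_add[OF this Ga0] show ?thesis
    by (simp add: blinfun.diff_right)
qed

lemma continuous_on_blinfun_apply_bounded:
  fixes G :: "'d::topological_space \<Rightarrow> 'a::real_normed_vector \<Rightarrow>\<^sub>L 'c::real_normed_vector"
  assumes G: "\<And>y. continuous_on S (\<lambda>u. G u y)" and bound: "\<And>u. u \<in> S \<Longrightarrow> norm (G u) \<le> C"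
    and a: "continuous_on S a"
  shows "continuous_on S (\<lambda>u. G u (a u))"
  unfolding continuous_on_def
proof (intro ballI, rule tendsto_blinfun_apply_bounded)
  fix w assume w: "w \<in> S"
  show "\<forall>\<^sub>F u in at w within S. norm (G u) \<le> C"
    using bound by (auto simp: eventually_at_filter)
  show "(a \<longlongrightarrow> a w) (at w within S)" "((\<lambda>u. G u (a w)) \<longlongrightarrow> G w (a w)) (at w within S)"
    using a G w unfolding continuous_on_def by blast+
qed

lemma set_integral_Icc_split:
  fixes \<phi> :: "real \<Rightarrow> 'a::{banach,second_countable_topology}"
  assumes "a \<le> p" "p \<le> b" "set_integrable lborel {a..b} \<phi>"
  shows "(LINT u:{a..b}|lborel. \<phi> u) = (LINT u:{a..p}|lborel. \<phi> u) + (LINT u:{p..b}|lborel. \<phi> u)"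
proof -
  have "{a..b} = {a..p} \<union> {p..b}" using assms by auto
  moreover have "(LINT u:{a..p} \<union> {p..b}|lborel. \<phi> u) = (LINT u:{a..p}|lborel. \<phi> u) + (LINT u:{p..b}|lborel. \<phi> u)"
    by (rule set_integral_Un_AE)
      (use AE_lborel_singleton[of p] assms in \<open>auto elim!: eventually_mono intro: set_integrable_subset\<close>)
  ultimately show ?thesis by simp
qed

lemma set_integral_Icc_norm_diff_const_le:
  fixes \<phi> :: "real \<Rightarrow> 'a::{banach,second_countable_topology}"
  assumes "p \<le> q" "set_integrable lborel {p..q} \<phi>" "\<And>u. u \<in> {p..q} \<Longrightarrow> norm (\<phi> u - c) \<le> e"
  shows "norm ((LINT u:{p..q}|lborel. \<phi> u) - (q - p) *\<^sub>R c) \<le> e * (q - p)"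
proof -
  have const: "set_integrable lborel {p..q} (\<lambda>_. c)" "set_integrable lborel {p..q} (\<lambda>_. e)"
    by (simp_all add: borel_integrable_atLeastAtMost')
  have "(LINT u:{p..q}|lborel. \<phi> u) - (q - p) *\<^sub>R c = (LINT u:{p..q}|lborel. \<phi> u - c)"
    using set_integral_diff(2)[OF assms(2) const(1)] assms(1) by (simp add: set_integral_const)
  also have "norm \<dots> \<le> (LINT u:{p..q}|lborel. norm (\<phi> u - c))"
    by (rule set_integral_norm_bound) (use assms const in auto)
  also have "\<dots> \<le> (LINT u:{p..q}|lborel. e)"
    by (rule set_integral_mono)
      (use assms const set_integrable_norm[OF set_integral_diff(1)[OF assms(2) const(1)]] in auto)
  also have "\<dots> = e * (q - p)"
    using assms by (simp add: set_integral_const)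
  finally show ?thesis .
qed

lemma set_integral_Icc_increment_le:
  fixes \<phi> :: "real \<Rightarrow> 'a::{banach,second_countable_topology}"
  assumes int: "set_integrable lborel {a..b} \<phi>" and y: "y \<in> {a..b}" and v: "v \<in> {a..b}"
    and close: "\<And>u. u \<in> {min y v..max y v} \<Longrightarrow> norm (\<phi> u - \<phi> v) \<le> e"
  shows "norm ((LINT u:{a..y}|lborel. \<phi> u) - (LINT u:{a..v}|lborel. \<phi> u) - (y - v) *\<^sub>R \<phi> v) \<le> e * \<bar>y - v\<bar>"
proof -
  have int': "set_integrable lborel {p..q} \<phi>" if "a \<le> p" "q \<le> b" for p q
    using int that by (auto intro: set_integrable_subset)
  show ?thesis
  proof (cases "v \<le> y")
    case True
    then show ?thesis
      using set_integral_Icc_split[of a v y \<phi>] set_integral_Icc_norm_diff_const_le[of v y \<phi>]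
        int'[of a y] int'[of v y] close y v by auto
  next
    case False
    then have "norm ((LINT u:{a..v}|lborel. \<phi> u) - (LINT u:{a..y}|lborel. \<phi> u) - (v - y) *\<^sub>R \<phi> v)
        \<le> e * (v - y)"
      using set_integral_Icc_split[of a y v \<phi>] set_integral_Icc_norm_diff_const_le[of y v \<phi>]
        int'[of a v] int'[of y v] close y v by auto
    then show ?thesis
      using False by (simp add: norm_minus_commute algebra_simps)
  qed
qed

lemma has_vector_derivative_set_integral_Icc:
  fixes \<phi> :: "real \<Rightarrow> 'a::{banach,second_countable_topology}"
  assumes cont: "continuous_on {a..b} \<phi>" and v: "v \<in> {a..b}"
  shows "((\<lambda>x. LINT u:{a..x}|lborel. \<phi> u) has_vector_derivative \<phi> v) (at v within {a..b})"
  unfolding has_vector_derivative_def has_derivative_within_alt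
proof (intro conjI allI impI bounded_linear_scaleR_left)
  fix e :: real assume "e > 0"
  then obtain d where d: "d > 0" "\<And>u. u \<in> {a..b} \<Longrightarrow> dist u v < d \<Longrightarrow> dist (\<phi> u) (\<phi> v) < e"
    using cont v unfolding continuous_on_iff by metis
  have "norm ((LINT u:{a..y}|lborel. \<phi> u) - (LINT u:{a..v}|lborel. \<phi> u) - (y - v) *\<^sub>R \<phi> v) \<le> e * \<bar>y - v\<bar>"
    if y: "y \<in> {a..b}" "\<bar>y - v\<bar> < d" for y
  proof (rule set_integral_Icc_increment_le[OF borel_integrable_atLeastAtMost'[OF cont] y(1) v])
    fix u assume "u \<in> {min y v..max y v}"
    then have "u \<in> {a..b}" "dist u v < d"
      using y v by (auto simp: dist_real_def min_def max_def split: if_splits)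
    then show "norm (\<phi> u - \<phi> v) \<le> e"
      using d(2) by (simp add: dist_norm less_imp_le)
  qed
  then show "\<exists>d>0. \<forall>y\<in>{a..b}. norm (y - v) < d \<longrightarrow>
      norm ((LINT u:{a..y}|lborel. \<phi> u) - (LINT u:{a..v}|lborel. \<phi> u) - (y - v) *\<^sub>R \<phi> v) \<le> e * norm (y - v)"
    using d(1) by (auto simp: real_norm_def)
qed

text \<open>The library's \<open>integral_FTC_atLeastAtMost\<close> needs a Euclidean codomain; for a general Banach
  space we compare \<open>F\<close> with the indefinite integral instead.\<close>

lemma set_integral_FTC_Icc:
  fixes F \<phi> :: "real \<Rightarrow> 'a::{banach,second_countable_topology}"
  assumes ab: "a \<le> b"
    and F: "\<And>v. v \<in> {a..b} \<Longrightarrow> (F has_vector_derivative \<phi> v) (at v within {a..b})"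
    and cont: "continuous_on {a..b} \<phi>"
  shows "(LINT u:{a..b}|lborel. \<phi> u) = F b - F a"
proof -
  define G where "G x = (LINT u:{a..x}|lborel. \<phi> u)" for x
  have "\<exists>c. \<forall>x\<in>{a..b}. F x - G x = c"
  proof (rule has_derivative_zero_constant)
    fix x assume "x \<in> {a..b}"
    then have "((\<lambda>x. F x - G x) has_vector_derivative \<phi> x - \<phi> x) (at x within {a..b})"
      unfolding G_def by (intro has_vector_derivative_diff F has_vector_derivative_set_integral_Icc cont)
    then show "((\<lambda>x. F x - G x) has_derivative (\<lambda>h. 0)) (at x within {a..b})"
      by (simp add: has_vector_derivative_def)
  qed simp
  then have "F b - G b = F a - G a"
    using ab by auto
  moreover have "G a = 0"
    unfolding G_def set_lebesgue_integral_def
    by (rule integral_eq_zero_AE) (use AE_lborel_singleton[of a] in \<open>auto elim!: eventually_mono\<close>)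
  ultimately show ?thesis
    by (simp add: G_def algebra_simps)
qed

lemma set_integral_blinfun_apply:
  fixes L :: "'a::{banach,second_countable_topology} \<Rightarrow>\<^sub>L 'b::{banach,second_countable_topology}"
  assumes "set_integrable M A \<phi>"
  shows "set_integrable M A (\<lambda>u. L (\<phi> u))" "(LINT u:A|M. L (\<phi> u)) = L (LINT u:A|M. \<phi> u)"
proof -
  have "(\<lambda>u. indicator A u *\<^sub>R L (\<phi> u)) = (\<lambda>u. L (indicator A u *\<^sub>R \<phi> u))"
    by (simp add: blinfun.scaleR_right)
  then show "set_integrable M A (\<lambda>u. L (\<phi> u))" "(LINT u:A|M. L (\<phi> u)) = L (LINT u:A|M. \<phi> u)"
    using assms integrable_bounded_linear[OF blinfun.bounded_linear_right]
      integral_bounded_linear[OF blinfun.bounded_linear_right]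
    unfolding set_integrable_def set_lebesgue_integral_def by simp_all
qed

lemma set_integral_Icc_eq_except_endpoint:
  fixes f g :: "real \<Rightarrow> 'a::{banach,second_countable_topology}"
  assumes ab: "a \<le> b" and g: "set_integrable lborel {a..b} g" and fg: "\<And>u. a \<le> u \<Longrightarrow> u < b \<Longrightarrow> f u = g u"
  shows "set_integrable lborel {a..b} f" "(LINT u:{a..b}|lborel. f u) = (LINT u:{a..b}|lborel. g u)"
proof -
  have eq: "indicator {a..b} u *\<^sub>R f u = indicator {a..b} u *\<^sub>R g u + indicator {b} u *\<^sub>R (f b - g b)" for u
    using ab fg[of u] by (auto simp: indicator_def)
  have point: "integrable lborel (\<lambda>u. indicator {b} u *\<^sub>R (f b - g b))"
    "integral\<^sup>L lborel (\<lambda>u. indicator {b} u *\<^sub>R (f b - g b)) = 0"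
    using set_integral_const[of "{b}" lborel "f b - g b"]
    by (simp_all add: set_lebesgue_integral_def integrable_real_mult_indicator)
  show "set_integrable lborel {a..b} f" "(LINT u:{a..b}|lborel. f u) = (LINT u:{a..b}|lborel. g u)"
    using g point unfolding set_integrable_def set_lebesgue_integral_def eq by simp_all
qed

section \<open>Generators of inhomogeneous contraction semigroups\<close>

lemma time_set_nonneg: "time_set J \<Longrightarrow> s \<in> J \<Longrightarrow> 0 \<le> s"
  unfolding time_set_def by auto

lemma time_set_between: "time_set J \<Longrightarrow> s \<in> J \<Longrightarrow> t \<in> J \<Longrightarrow> s \<le> u \<Longrightarrow> u \<le> t \<Longrightarrow> u \<in> J"
  unfolding time_set_def by auto

lemma time_set_one_sided_nontrivial:
  assumes J: "time_set J" and v: "v \<in> J"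
  shows "\<not> trivial_limit (at 0 within {h. 0 < h \<and> v + h \<in> J}) \<or>
         \<not> trivial_limit (at 0 within {h. 0 < h \<and> v - h \<in> J})"
proof -
  have nontrivial: "\<not> trivial_limit (at (0::real) within S)" if "d > 0" "{0<..<d} \<subseteq> S" for d S
    using that islimpt_subset islimpt_greaterThanLessThan1 unfolding trivial_limit_within by blast
  from J consider "J = {0..}" | T where "T > 0" "J = {0..T}"
    unfolding time_set_def by auto
  then show ?thesis
  proof cases
    case 1
    then show ?thesis using nontrivial[of 1 "{h. 0 < h \<and> v + h \<in> J}"] v by force
  next
    case 2
    show ?thesis
    proof (cases "v < T")
      case True
      then have "{0<..<T - v} \<subseteq> {h. 0 < h \<and> v + h \<in> J}"
        using 2 v by auto
      then show ?thesis using nontrivial[of "T - v"] True by auto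
    next
      case False
      then have "{0<..<T} \<subseteq> {h. 0 < h \<and> v - h \<in> J}"
        using 2 v by auto
      then show ?thesis using nontrivial[of T] 2 by auto
    qed
  qed
qed

lemma gen_lim_unique:
  assumes "time_set J" "v \<in> J" "gen_lim J \<Gamma> v f A" "gen_lim J \<Gamma> v f B"
  shows "A = B"
  using time_set_one_sided_nontrivial[OF assms(1,2)] assms(3,4) tendsto_unique
  unfolding gen_lim_def by blast

lemma gen_lim_gen:
  assumes J: "time_set J" and v: "v \<in> J" and f: "f \<in> gen_dom J \<Gamma> v"
  shows "gen_lim J \<Gamma> v f (gen J \<Gamma> v f)"
proof -
  obtain A where A: "gen_lim J \<Gamma> v f A"
    using f unfolding gen_dom_def by auto
  show ?thesis
    unfolding gen_def by (rule theI[where P = "gen_lim J \<Gamma> v f", OF A]) (metis gen_lim_unique[OF J v A])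
qed

lemma gen_lim_right_quotient:
  assumes "gen_lim J \<Gamma> v f A"
  shows "((\<lambda>u. (1 / (u - v)) *\<^sub>R (\<Gamma> v u f - f)) \<longlongrightarrow> A) (at v within {u \<in> J. v < u})"
proof -
  have "filterlim (\<lambda>u. u - v) (at 0 within {h. 0 < h \<and> v + h \<in> J}) (at v within {u \<in> J. v < u})"
    by (rule filterlim_at_withinI) (auto intro!: tendsto_eq_intros simp: eventually_at_filter)
  moreover have "((\<lambda>h. (1 / h) *\<^sub>R (\<Gamma> v (v + h) f - f)) \<longlongrightarrow> A) (at 0 within {h. 0 < h \<and> v + h \<in> J})"
    using assms unfolding gen_lim_def by blast
  ultimately show ?thesis
    using filterlim_compose by fastforce
qed

lemma gen_lim_left_quotient:
  assumes "gen_lim J \<Gamma> v f A"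
  shows "((\<lambda>u. (1 / (v - u)) *\<^sub>R (\<Gamma> u v f - f)) \<longlongrightarrow> A) (at v within {u \<in> J. u < v})"
proof -
  have "filterlim (\<lambda>u. v - u) (at 0 within {h. 0 < h \<and> v - h \<in> J}) (at v within {u \<in> J. u < v})"
    by (rule filterlim_at_withinI) (auto intro!: tendsto_eq_intros simp: eventually_at_filter)
  moreover have "((\<lambda>h. (1 / h) *\<^sub>R (\<Gamma> (v - h) v f - f)) \<longlongrightarrow> A) (at 0 within {h. 0 < h \<and> v - h \<in> J})"
    using assms unfolding gen_lim_def by blast
  ultimately show ?thesis
    using filterlim_compose by fastforce
qed

lemma inh_semigroup_apply_comp:
  assumes "inh_semigroup J \<Gamma>" "r \<in> J" "u \<in> J" "t \<in> J" "r \<le> u" "u \<le> t"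
  shows "\<Gamma> r t y = \<Gamma> r u (\<Gamma> u t y)"
  using assms unfolding inh_semigroup_def by (metis blinfun_apply_blinfun_compose)

lemma inh_semigroup_apply_id: "inh_semigroup J \<Gamma> \<Longrightarrow> t \<in> J \<Longrightarrow> \<Gamma> t t y = y"
  unfolding inh_semigroup_def by simp

lemma tendsto_semigroup_right_quotient:
  fixes \<Gamma> :: "real \<Rightarrow> real \<Rightarrow> ('y::real_normed_vector \<Rightarrow>\<^sub>L 'y)"
  assumes semigroup: "inh_semigroup J \<Gamma>" and r: "r \<in> J" and v: "v \<in> J" "r \<le> v"
    and A: "gen_lim J \<Gamma> v f A"
  shows "((\<lambda>u. (1 / (u - v)) *\<^sub>R (\<Gamma> r u f - \<Gamma> r v f)) \<longlongrightarrow> \<Gamma> r v A) (at v within {u \<in> J. v < u})"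
proof (rule Lim_transform_eventually)
  show "((\<lambda>u. \<Gamma> r v ((1 / (u - v)) *\<^sub>R (\<Gamma> v u f - f))) \<longlongrightarrow> \<Gamma> r v A) (at v within {u \<in> J. v < u})"
    by (intro blinfun.tendsto tendsto_const gen_lim_right_quotient A)
  have "\<Gamma> r v ((1 / (u - v)) *\<^sub>R (\<Gamma> v u f - f)) = (1 / (u - v)) *\<^sub>R (\<Gamma> r u f - \<Gamma> r v f)"
    if "u \<in> J" "v < u" for u
    using inh_semigroup_apply_comp[OF semigroup, of r v u f] that r v
    by (simp add: blinfun.diff_right blinfun.scaleR_right)
  then show "\<forall>\<^sub>F u in at v within {u \<in> J. v < u}.
      \<Gamma> r v ((1 / (u - v)) *\<^sub>R (\<Gamma> v u f - f)) = (1 / (u - v)) *\<^sub>R (\<Gamma> r u f - \<Gamma> r v f)"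
    by (auto simp: eventually_at_filter)
qed

text \<open>From the left the evolution operator in front, \<open>\<Gamma> r u\<close>, moves with \<open>u\<close>; this is where the
  contraction bound and the continuity of \<open>\<Gamma> r \<cdot> A\<close> enter.\<close>

lemma tendsto_semigroup_left_quotient:
  fixes \<Gamma> :: "real \<Rightarrow> real \<Rightarrow> ('y::real_normed_vector \<Rightarrow>\<^sub>L 'y)"
  assumes semigroup: "inh_semigroup J \<Gamma>"
    and contraction: "\<And>u. u \<in> J \<Longrightarrow> r \<le> u \<Longrightarrow> norm (\<Gamma> r u) \<le> 1"
    and r: "r \<in> J" and v: "v \<in> J" "r \<le> v" and A: "gen_lim J \<Gamma> v f A"
    and cont: "continuous_on {u \<in> J. r \<le> u} (\<lambda>u. \<Gamma> r u A)"
  shows "((\<lambda>u. (1 / (u - v)) *\<^sub>R (\<Gamma> r u f - \<Gamma> r v f)) \<longlongrightarrow> \<Gamma> r v A)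
           (at v within {u \<in> J. r \<le> u \<and> u < v})"
proof (rule Lim_transform_eventually)
  let ?L = "{u \<in> J. r \<le> u \<and> u < v}"
  show "((\<lambda>u. \<Gamma> r u ((1 / (v - u)) *\<^sub>R (\<Gamma> u v f - f))) \<longlongrightarrow> \<Gamma> r v A) (at v within ?L)"
  proof (rule tendsto_blinfun_apply_bounded)
    show "\<forall>\<^sub>F u in at v within ?L. norm (\<Gamma> r u) \<le> 1"
      using contraction by (auto simp: eventually_at_filter)
    show "((\<lambda>u. (1 / (v - u)) *\<^sub>R (\<Gamma> u v f - f)) \<longlongrightarrow> A) (at v within ?L)"
      by (rule tendsto_within_subset[OF gen_lim_left_quotient[OF A]]) auto
    show "((\<lambda>u. \<Gamma> r u A) \<longlongrightarrow> \<Gamma> r v A) (at v within ?L)"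
      by (rule tendsto_within_subset[of _ _ _ "{u \<in> J. r \<le> u}"])
        (use cont v in \<open>auto simp: continuous_on_def\<close>)
  qed
  have "\<Gamma> r u ((1 / (v - u)) *\<^sub>R (\<Gamma> u v f - f)) = (1 / (u - v)) *\<^sub>R (\<Gamma> r u f - \<Gamma> r v f)"
    if "u \<in> ?L" for u
  proof -
    have "\<Gamma> r v f = \<Gamma> r u (\<Gamma> u v f)"
      using inh_semigroup_apply_comp[OF semigroup, of r u v f] that r v by simp
    moreover have "1 / (u - v) = - (1 / (v - u))"
      by (simp add: minus_divide_right)
    ultimately show ?thesis
      by (simp add: blinfun.diff_right blinfun.scaleR_right scaleR_diff_right)
  qed
  then show "\<forall>\<^sub>F u in at v within ?L.
      \<Gamma> r u ((1 / (v - u)) *\<^sub>R (\<Gamma> u v f - f)) = (1 / (u - v)) *\<^sub>R (\<Gamma> r u f - \<Gamma> r v f)"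
    by (auto simp: eventually_at_filter)
qed

lemma has_vector_derivative_semigroup:
  fixes \<Gamma> :: "real \<Rightarrow> real \<Rightarrow> ('y::real_normed_vector \<Rightarrow>\<^sub>L 'y)"
  assumes semigroup: "inh_semigroup J \<Gamma>"
    and contraction: "\<And>u. u \<in> J \<Longrightarrow> r \<le> u \<Longrightarrow> norm (\<Gamma> r u) \<le> 1"
    and r: "r \<in> J" and v: "v \<in> J" "r \<le> v" and A: "gen_lim J \<Gamma> v f A"
    and cont: "continuous_on {u \<in> J. r \<le> u} (\<lambda>u. \<Gamma> r u A)"
  shows "((\<lambda>u. \<Gamma> r u f) has_vector_derivative \<Gamma> r v A) (at v within {u \<in> J. r \<le> u})"
proof -
  have "{u \<in> J. r \<le> u} - {v} = {u \<in> J. r \<le> u \<and> u < v} \<union> {u \<in> J. v < u} - {v}"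
    using v by auto
  then have "at v within {u \<in> J. r \<le> u} = at v within ({u \<in> J. r \<le> u \<and> u < v} \<union> {u \<in> J. v < u})"
    by (simp add: at_within_def)
  then show ?thesis
    unfolding has_vector_derivative_iff_difference_quotient
    using tendsto_semigroup_left_quotient[OF assms] tendsto_semigroup_right_quotient[OF semigroup r v A]
    by (simp add: Lim_within_Un)
qed

lemma set_integral_semigroup_gen:
  fixes \<Gamma> :: "real \<Rightarrow> real \<Rightarrow> ('y::{banach,second_countable_topology} \<Rightarrow>\<^sub>L 'y)"
  assumes J: "time_set J" and semigroup: "inh_semigroup J \<Gamma>"
    and contraction: "\<And>r u. r \<in> J \<Longrightarrow> u \<in> J \<Longrightarrow> r \<le> u \<Longrightarrow> norm (\<Gamma> r u) \<le> 1"
    and reg: "regular J \<iota> \<Gamma>"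
    and gen_cont: "continuous_on J (\<lambda>u. gen J \<Gamma> u (\<iota> g))"
    and r: "r \<in> J" and b: "b \<in> J" and rb: "r \<le> b"
  shows "set_integrable lborel {r..b} (\<lambda>u. \<Gamma> r u (gen J \<Gamma> u (\<iota> g)))"
    and "(LINT u:{r..b}|lborel. \<Gamma> r u (gen J \<Gamma> u (\<iota> g))) = \<Gamma> r b (\<iota> g) - \<iota> g"
proof -
  have sub: "{r..b} \<subseteq> {u \<in> J. r \<le> u}"
    using time_set_between[OF J r b] by auto
  have \<Gamma>_cont: "continuous_on {u \<in> J. r \<le> u} (\<lambda>u. \<Gamma> r u y)" for y
    using reg r unfolding regular_def by blast
  have cont: "continuous_on {r..b} (\<lambda>u. \<Gamma> r u (gen J \<Gamma> u (\<iota> g)))"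
    using continuous_on_blinfun_apply_bounded[OF \<Gamma>_cont _ continuous_on_subset[OF gen_cont]] contraction r sub
    by (auto intro: continuous_on_subset)
  have "((\<lambda>u. \<Gamma> r u (\<iota> g)) has_vector_derivative \<Gamma> r v (gen J \<Gamma> v (\<iota> g))) (at v within {r..b})"
    if v: "v \<in> {r..b}" for v
  proof (rule has_vector_derivative_within_subset[OF has_vector_derivative_semigroup[OF semigroup] sub])
    have "\<iota> g \<in> gen_dom J \<Gamma> v"
      using reg sub v unfolding regular_def gen_dom_all_def by blast
    then show "gen_lim J \<Gamma> v (\<iota> g) (gen J \<Gamma> v (\<iota> g))"
      using gen_lim_gen[OF J] sub v by blast
  qed (use r v sub \<Gamma>_cont contraction in auto)
  from set_integral_FTC_Icc[OF rb this cont]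
  show "(LINT u:{r..b}|lborel. \<Gamma> r u (gen J \<Gamma> u (\<iota> g))) = \<Gamma> r b (\<iota> g) - \<iota> g"
    using inh_semigroup_apply_id[OF semigroup r] by simp
  show "set_integrable lborel {r..b} (\<lambda>u. \<Gamma> r u (gen J \<Gamma> u (\<iota> g)))"
    using borel_integrable_atLeastAtMost'[OF cont] .
qed

section \<open>Renewal paths\<close>

lemma Tkse_le_iff:
  assumes \<epsilon>: "0 < \<epsilon>"
  shows "Tkse T \<epsilon> s k \<le> u \<longleftrightarrow> Tks T s k \<le> tscale (1 / \<epsilon>) s u"
  using \<epsilon> by (simp add: Tkse_def tscale_def field_simps)

lemma Tkse_less_iff:
  assumes \<epsilon>: "0 < \<epsilon>"
  shows "u < Tkse T \<epsilon> s k \<longleftrightarrow> tscale (1 / \<epsilon>) s u < Tks T s k"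
  using \<epsilon> by (simp add: Tkse_def tscale_def field_simps)

context
  fixes T :: "nat \<Rightarrow> real"
  assumes T0: "T 0 = 0" and T_Suc: "\<And>n. T n < T (Suc n)" and T_unbounded: "\<And>r. \<exists>n. r < T n"
begin

lemma T_less_iff: "T m < T n \<longleftrightarrow> m < n"
  using T_Suc by (simp add: strict_mono_Suc_iff strict_mono_less)

lemma cnt_eq:
  assumes "T n \<le> t" "t < T (Suc n)"
  shows "cnt T t = n"
  unfolding cnt_def
proof (rule Greatest_equality)
  fix m assume "T m \<le> t"
  with assms(2) show "m \<le> n"
    using T_less_iff[of m "Suc n"] by simp
qed fact

lemma cnt_bounds:
  assumes "0 \<le> t"
  shows "T (cnt T t) \<le> t" "t < T (Suc (cnt T t))"
proof -
  obtain n where "T n \<le> t" "t < T (Suc n)"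
    using exists_least_lemma[of "\<lambda>n. t < T n"] T0 T_unbounded assms by force
  then show "T (cnt T t) \<le> t" "t < T (Suc (cnt T t))"
    using cnt_eq by simp_all
qed

lemma cnt_T: "cnt T (T n) = n"
  by (rule cnt_eq) (simp_all add: T_Suc)

lemma cnt_mono:
  assumes "0 \<le> s" "s \<le> t"
  shows "cnt T s \<le> cnt T t"
  using cnt_bounds(1)[of s] cnt_bounds(2)[of t] assms T_less_iff[of "cnt T s" "Suc (cnt T t)"]
  by simp

lemma xks_eq: "xks X T s k = X (cnt T s + k)"
  by (simp add: xks_def xpath_def Tks_def cnt_T)

context
  fixes s \<epsilon> :: real
  assumes s: "0 \<le> s" and \<epsilon>: "0 < \<epsilon>"
begin

lemma Tkse_strict_mono: "strict_mono (Tkse T \<epsilon> s)"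
proof (rule strict_monoI_Suc)
  fix k
  have "Tks T s k < Tks T s (Suc k)"
    using cnt_bounds(2)[OF s] T_Suc[of "cnt T s + k"] by (simp add: Tks_def)
  then show "Tkse T \<epsilon> s k < Tkse T \<epsilon> s (Suc k)"
    using \<epsilon> by (simp add: Tkse_def)
qed

lemma Ns_xpath_on_piece:
  assumes "Tkse T \<epsilon> s k \<le> u" "u < Tkse T \<epsilon> s (Suc k)"
  shows "Ns T s (tscale (1 / \<epsilon>) s u) = k" "xpath X T (tscale (1 / \<epsilon>) s u) = xks X T s k"
proof -
  have "T (cnt T s + k) \<le> Tks T s k"
    using cnt_bounds(1)[OF s] by (simp add: Tks_def)
  then have "cnt T (tscale (1 / \<epsilon>) s u) = cnt T s + k"
    using assms by (intro cnt_eq) (auto simp: Tkse_le_iff[OF \<epsilon>] Tkse_less_iff[OF \<epsilon>] Tks_def)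
  then show "Ns T s (tscale (1 / \<epsilon>) s u) = k" "xpath X T (tscale (1 / \<epsilon>) s u) = xks X T s k"
    by (simp_all add: Ns_def xpath_def xks_eq)
qed

lemma Tkse_Ns_bounds:
  assumes "s \<le> u"
  shows "Tkse T \<epsilon> s (Ns T s (tscale (1 / \<epsilon>) s u)) \<le> u"
    "u < Tkse T \<epsilon> s (Suc (Ns T s (tscale (1 / \<epsilon>) s u)))"
proof -
  let ?u = "tscale (1 / \<epsilon>) s u"
  have su: "s \<le> ?u"
    using assms \<epsilon> by (simp add: tscale_def)
  then have "cnt T ?u = cnt T s + Ns T s ?u"
    using cnt_mono[OF s su] by (simp add: Ns_def)
  then show "Tkse T \<epsilon> s (Ns T s ?u) \<le> u" "u < Tkse T \<epsilon> s (Suc (Ns T s ?u))"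
    using cnt_bounds[of ?u] s su by (auto simp: Tkse_le_iff[OF \<epsilon>] Tkse_less_iff[OF \<epsilon>] Tks_def)
qed

end

end

section \<open>The random evolution along a renewal path\<close>

lemma blinfun_compose_id [simp]: "a o\<^sub>L id_blinfun = a" "id_blinfun o\<^sub>L a = a"
  by (auto intro!: blinfun_eqI)

lemma foldr_blinfun_compose:
  "foldr (\<lambda>k acc. F k o\<^sub>L acc) ks B = foldr (\<lambda>k acc. F k o\<^sub>L acc) ks id_blinfun o\<^sub>L B"
  by (induction ks) (auto intro!: blinfun_eqI)

context
  fixes \<Gamma>s :: "'x \<Rightarrow> real \<Rightarrow> real \<Rightarrow> ('y::real_normed_vector \<Rightarrow>\<^sub>L 'y)"
    and D :: "real \<Rightarrow> 'x \<Rightarrow> 'x \<Rightarrow> ('y \<Rightarrow>\<^sub>L 'y)"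
    and X :: "nat \<Rightarrow> 'x" and T :: "nat \<Rightarrow> real" and \<epsilon> s :: real
begin

definition Vop_factor :: "nat \<Rightarrow> 'y \<Rightarrow>\<^sub>L 'y" where
  "Vop_factor k = \<Gamma>s (xks X T s (k - 1)) (Tkse T \<epsilon> s (k - 1)) (Tkse T \<epsilon> s k)
                    o\<^sub>L D \<epsilon> (xks X T s (k - 1)) (xks X T s k)"

definition Vop_prefix :: "nat \<Rightarrow> 'y \<Rightarrow>\<^sub>L 'y" where
  "Vop_prefix n = foldr (\<lambda>k acc. Vop_factor k o\<^sub>L acc) [1..<Suc n] id_blinfun"

lemma Vop_prefix_0: "Vop_prefix 0 = id_blinfun"
  by (simp add: Vop_prefix_def)

lemma Vop_prefix_Suc: "Vop_prefix (Suc n) = Vop_prefix n o\<^sub>L Vop_factor (Suc n)"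
  using foldr_blinfun_compose[of Vop_factor "[1..<Suc n]" "Vop_factor (Suc n) o\<^sub>L id_blinfun"]
  by (simp add: Vop_prefix_def)

lemma Vop_eq_Vop_prefix:
  "Vop \<Gamma>s D X T \<epsilon> s u = Vop_prefix (Ns T s (tscale (1 / \<epsilon>) s u))
     o\<^sub>L \<Gamma>s (xpath X T (tscale (1 / \<epsilon>) s u)) (Tkse T \<epsilon> s (Ns T s (tscale (1 / \<epsilon>) s u))) u"
  unfolding Vop_def Vop_prefix_def Vop_factor_def Let_def by (rule foldr_blinfun_compose)

end

locale random_evolution_path =
  fixes J :: "real set"
    and \<iota> :: "'z::real_normed_vector \<Rightarrow>\<^sub>L 'y::{banach,second_countable_topology}"
    and \<Gamma>s :: "'x \<Rightarrow> real \<Rightarrow> real \<Rightarrow> ('y \<Rightarrow>\<^sub>L 'y)"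
    and D :: "real \<Rightarrow> 'x \<Rightarrow> 'x \<Rightarrow> ('y \<Rightarrow>\<^sub>L 'y)"
    and X :: "nat \<Rightarrow> 'x" and T :: "nat \<Rightarrow> real" and \<epsilon> s t :: real and g :: 'z
  assumes J: "time_set J"
    and semigroup: "\<And>x. inh_semigroup J (\<Gamma>s x)"
    and contraction: "\<And>x r u. r \<in> J \<Longrightarrow> u \<in> J \<Longrightarrow> r \<le> u \<Longrightarrow> norm (\<Gamma>s x r u) \<le> 1"
    and reg: "\<And>x. regular J \<iota> (\<Gamma>s x)"
    and gen_cont: "\<And>x. continuous_on J (\<lambda>u. gen J (\<Gamma>s x) u (\<iota> g))"
    and T0: "T 0 = 0" and T_Suc: "\<And>n. T n < T (Suc n)" and T_unbounded: "\<And>r. \<exists>n. r < T n"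
    and s: "s \<in> J" and t: "t \<in> J" and st: "s \<le> t" and \<epsilon>: "0 < \<epsilon>"
begin

abbreviation "\<tau> \<equiv> Tkse T \<epsilon> s"
abbreviation "xk \<equiv> xks X T s"
abbreviation "P \<equiv> Vop_prefix \<Gamma>s D X T \<epsilon> s"
abbreviation "V \<equiv> Vop \<Gamma>s D X T \<epsilon> s"

abbreviation drift :: "real \<Rightarrow> 'y" where
  "drift u \<equiv> V u (gen J (\<Gamma>s (xpath X T (tscale (1 / \<epsilon>) s u))) u (\<iota> g))"

lemma s_nonneg: "0 \<le> s"
  using time_set_nonneg[OF J s] .

lemmas tau_strict_mono = Tkse_strict_mono[OF T0 T_Suc T_unbounded s_nonneg \<epsilon>]

lemma s_le_tau: "s \<le> \<tau> k"
  using strict_mono_less_eq[OF tau_strict_mono, of 0 k] by (simp add: Tkse_def Tks_def)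

lemma tau_in_J: "\<tau> k \<le> t \<Longrightarrow> \<tau> k \<in> J"
  using time_set_between[OF J s t s_le_tau] .

lemma Vop_on_piece:
  assumes "\<tau> k \<le> u" "u < \<tau> (Suc k)"
  shows "V u = P k o\<^sub>L \<Gamma>s (xk k) (\<tau> k) u"
  using Vop_eq_Vop_prefix Ns_xpath_on_piece[OF T0 T_Suc T_unbounded s_nonneg \<epsilon> assms] by metis

lemma set_integral_drift_piece:
  assumes k: "\<tau> k \<le> b" "b \<le> \<tau> (Suc k)" "b \<le> t"
  shows "set_integrable lborel {\<tau> k..b} drift"
    "(LINT u:{\<tau> k..b}|lborel. drift u) = P k (\<Gamma>s (xk k) (\<tau> k) b (\<iota> g) - \<iota> g)"
proof -
  let ?\<phi> = "\<lambda>u. \<Gamma>s (xk k) (\<tau> k) u (gen J (\<Gamma>s (xk k)) u (\<iota> g))"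
  have b: "b \<in> J"
    using time_set_between[OF J s t] s_le_tau[of k] k by force
  have "\<tau> k \<in> J"
    using tau_in_J k by simp
  note FTC = set_integral_semigroup_gen[OF J semigroup contraction reg gen_cont this b k(1)]
  note P\<phi> = set_integral_blinfun_apply[OF FTC(1), of "P k"]
  have "drift u = P k (?\<phi> u)" if "\<tau> k \<le> u" "u < b" for u
    using that k Vop_on_piece[of k u] Ns_xpath_on_piece(2)[OF T0 T_Suc T_unbounded s_nonneg \<epsilon>, of k u X]
    by simp
  note piece = set_integral_Icc_eq_except_endpoint[OF k(1) P\<phi>(1) this]
  show "set_integrable lborel {\<tau> k..b} drift"
    using piece(1) .
  show "(LINT u:{\<tau> k..b}|lborel. drift u) = P k (\<Gamma>s (xk k) (\<tau> k) b (\<iota> g) - \<iota> g)"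
    using piece(2) P\<phi>(2) FTC(2) by simp
qed

lemma set_integral_drift:
  assumes "\<tau> m \<le> b" "b \<le> \<tau> (Suc m)" "b \<le> t"
  shows "set_integrable lborel {s..b} drift \<and>
    (LINT u:{s..b}|lborel. drift u) = (\<Sum>k<m. P k (\<Gamma>s (xk k) (\<tau> k) (\<tau> (Suc k)) (\<iota> g) - \<iota> g))
      + P m (\<Gamma>s (xk m) (\<tau> m) b (\<iota> g) - \<iota> g)"
  using assms
proof (induction m arbitrary: b)
  case 0
  then show ?case
    using set_integral_drift_piece[of 0 b] by (simp add: Tkse_def Tks_def)
next
  case (Suc m)
  have le: "\<tau> m \<le> \<tau> (Suc m)" "\<tau> (Suc m) \<le> t"
    using strict_mono_less_eq[OF tau_strict_mono, of m "Suc m"] Suc.prems by auto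
  note IH = Suc.IH[OF le(1) order_refl le(2)]
  note piece = set_integral_drift_piece[OF Suc.prems]
  have "{s..b} = {s..\<tau> (Suc m)} \<union> {\<tau> (Suc m)..b}"
    using s_le_tau[of "Suc m"] Suc.prems by auto
  then have int: "set_integrable lborel {s..b} drift"
    using set_integrable_Un[OF conjunct1[OF IH] piece(1)] by simp
  show ?case
    using set_integral_Icc_split[OF s_le_tau Suc.prems(1) int] IH piece(2) int by simp
qed

lemma Lim_at_left_Vop:
  assumes j: "\<tau> (Suc j) \<le> t"
  shows "Lim (at_left (\<tau> (Suc j))) (\<lambda>u. V u y) = P j (\<Gamma>s (xk j) (\<tau> j) (\<tau> (Suc j)) y)"
proof -
  let ?a = "\<tau> j" and ?b = "\<tau> (Suc j)"
  have ab: "?a < ?b"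
    using strict_monoD[OF tau_strict_mono] by simp
  have "?a \<in> J" "?b \<in> J"
    using tau_in_J ab j by auto
  then have "{?a..?b} \<subseteq> {u \<in> J. ?a \<le> u}"
    using time_set_between[OF J \<open>?a \<in> J\<close> \<open>?b \<in> J\<close>] by auto
  moreover have "continuous_on {u \<in> J. ?a \<le> u} (\<lambda>u. \<Gamma>s (xk j) ?a u y)"
    using reg \<open>?a \<in> J\<close> unfolding regular_def by blast
  ultimately have "continuous_on {?a..?b} (\<lambda>u. \<Gamma>s (xk j) ?a u y)"
    by (rule continuous_on_subset[rotated])
  then have "((\<lambda>u. \<Gamma>s (xk j) ?a u y) \<longlongrightarrow> \<Gamma>s (xk j) ?a ?b y) (at_left ?b)"
    using ab unfolding continuous_on_def at_within_Icc_at_left[OF ab, symmetric] by auto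
  then have "((\<lambda>u. P j (\<Gamma>s (xk j) ?a u y)) \<longlongrightarrow> P j (\<Gamma>s (xk j) ?a ?b y)) (at_left ?b)"
    by (rule blinfun.tendsto[OF tendsto_const])
  moreover have "\<forall>\<^sub>F u in at_left ?b. P j (\<Gamma>s (xk j) ?a u y) = V u y"
    using eventually_at_left_real[OF ab] by eventually_elim (simp add: Vop_on_piece[of j] less_imp_le)
  ultimately have "((\<lambda>u. V u y) \<longlongrightarrow> P j (\<Gamma>s (xk j) ?a ?b y)) (at_left ?b)"
    by (rule Lim_transform_eventually)
  then show ?thesis
    by (rule tendsto_Lim[rotated]) simp
qed

lemma Vop_integral_identity:
  "V t (\<iota> g) = \<iota> g + (LINT u:{s..t}|lborel. drift u)
     + (\<Sum>k\<in>{1..Ns T s (tscale (1 / \<epsilon>) s t)}.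
          Lim (at_left (\<tau> k)) (\<lambda>u. V u (D \<epsilon> (xk (k - 1)) (xk k) (\<iota> g) - \<iota> g)))"
proof -
  define N where "N = Ns T s (tscale (1 / \<epsilon>) s t)"
  let ?f = "\<iota> g"
  let ?\<Gamma> = "\<lambda>k. \<Gamma>s (xk k) (\<tau> k) (\<tau> (Suc k))"
  let ?J = "\<lambda>k. D \<epsilon> (xk k) (xk (Suc k))"
  have N: "\<tau> N \<le> t" "t < \<tau> (Suc N)"
    using Tkse_Ns_bounds[OF T0 T_Suc T_unbounded s_nonneg \<epsilon> st] by (simp_all add: N_def)
  have jump: "Lim (at_left (\<tau> (Suc k))) (\<lambda>u. V u (D \<epsilon> (xk k) (xk (Suc k)) ?f - ?f))
      = P k (?\<Gamma> k (?J k ?f - ?f))" if "k < N" for k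
  proof -
    have "\<tau> (Suc k) \<le> t"
      using strict_mono_less_eq[OF tau_strict_mono, of "Suc k" N] N(1) that by auto
    then show ?thesis
      by (rule Lim_at_left_Vop)
  qed
  have jumps: "(\<Sum>k\<in>{1..N}. Lim (at_left (\<tau> k)) (\<lambda>u. V u (D \<epsilon> (xk (k - 1)) (xk k) ?f - ?f)))
      = (\<Sum>k<N. P k (?\<Gamma> k (?J k ?f - ?f)))"
    unfolding One_nat_def sum.atLeast1_atMost_eq by (rule sum.cong) (simp_all add: jump)
  have drift: "(LINT u:{s..t}|lborel. drift u) = (\<Sum>k<N. P k (?\<Gamma> k ?f - ?f)) + P N (\<Gamma>s (xk N) (\<tau> N) t ?f - ?f)"
    using set_integral_drift[OF N(1) less_imp_le[OF N(2)] order_refl] by simp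
  have step: "P k (?\<Gamma> k ?f - ?f) + P k (?\<Gamma> k (?J k ?f - ?f)) = P (Suc k) ?f - P k ?f" for k
    by (simp add: Vop_prefix_Suc Vop_factor_def blinfun.diff_right)
  have "(\<Sum>k<N. P k (?\<Gamma> k ?f - ?f)) + (\<Sum>k<N. P k (?\<Gamma> k (?J k ?f - ?f))) = P N ?f - ?f"
    unfolding sum.distrib[symmetric] step
    using sum_lessThan_telescope[of "\<lambda>k. P k ?f" N] by (simp add: Vop_prefix_0)
  moreover have "V t ?f = P N (\<Gamma>s (xk N) (\<tau> N) t ?f)"
    using Vop_on_piece[OF N] by simp
  ultimately show ?thesis
    unfolding N_def[symmetric] jumps drift by (simp add: blinfun.diff_right algebra_simps)
qed

end

theorem lemma4p10:
  fixes J :: "real set"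
    and \<iota> :: "'z::{banach,second_countable_topology} \<Rightarrow>\<^sub>L 'y::{banach,second_countable_topology}"
    and M :: "'a measure"
    and xs :: "nat \<Rightarrow> 'a \<Rightarrow> 'x::finite"
    and Ts :: "nat \<Rightarrow> 'a \<Rightarrow> real"
    and Q :: "'x \<Rightarrow> 'x \<Rightarrow> real measure"
    and \<Gamma>s :: "'x \<Rightarrow> real \<Rightarrow> real \<Rightarrow> ('y \<Rightarrow>\<^sub>L 'y)"
    and D :: "real \<Rightarrow> 'x \<Rightarrow> 'x \<Rightarrow> ('y \<Rightarrow>\<^sub>L 'y)"
    and s t :: real
    and g :: 'z
  assumes J: "time_set J"
    and emb_inj: "inj \<iota>"
    and complete: "complete_measure M"
    and MRP: "markov_renewal M xs Ts Q"
    and semigroup: "\<And>x. inh_semigroup J (\<Gamma>s x)"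
    and meas: "\<And>x. (\<lambda>(r, u, f). \<Gamma>s x r u f) \<in> borel_measurable
                      (restrict_space borel {(r, u, f). r \<in> J \<and> u \<in> J \<and> r \<le> u})"
    and D0: "\<And>x y. D 0 x y = id_blinfun"
    \<comment> \<open>(A0)\<close>
    and A0a: "range \<iota> \<subseteq> D1_dom D"
    and A0b: "\<And>x. regular J \<iota> (\<Gamma>s x)"
    and A0c: "\<And>x h. continuous_on J (\<lambda>u. gen J (\<Gamma>s x) u (\<iota> h))"
    and A0d: "\<exists>\<tau>>0. \<forall>x y. measure (Q x y) {\<tau><..} = 0"
    and A0e: "\<And>x r u. r \<in> J \<Longrightarrow> u \<in> J \<Longrightarrow> r \<le> u \<Longrightarrow> norm (\<Gamma>s x r u) \<le> 1"
             "\<And>\<epsilon> x y. \<epsilon> \<in> {0..1} \<Longrightarrow> norm (D \<epsilon> x y) \<le> 1"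
    and A0f: "\<And>x u. u \<in> J \<Longrightarrow> bounded_linear (\<lambda>h. gen J (\<Gamma>s x) u (\<iota> h))"
             "\<And>x. \<exists>C. \<forall>u\<in>J. onorm (\<lambda>h. gen J (\<Gamma>s x) u (\<iota> h)) \<le> C"
    and A0g: "\<And>f. f \<in> (\<Inter>x. Ader_dom J \<iota> \<Gamma>s x) \<Longrightarrow>
                 (\<exists>C. \<forall>u\<in>J. \<forall>x. norm (\<iota> (Ader J \<iota> \<Gamma>s x u f)) \<le> C) \<and>
                 (\<exists>C. \<forall>u\<in>J. \<forall>x. norm (inv \<iota> (gen J (\<Gamma>s x) u f)) \<le> C)"
    and A0h: "\<And>f. f \<in> D1_dom D \<Longrightarrow> \<exists>C. \<forall>\<epsilon>\<in>{0..1}. \<forall>x y. norm (D1 D \<epsilon> x y f) \<le> C"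
    and A0i: "\<And>f. f \<in> D2_dom D \<Longrightarrow> \<exists>C. \<forall>\<epsilon>\<in>{0..1}. \<forall>x y. norm (D2 D \<epsilon> x y f) \<le> C"
    \<comment> \<open>(s,t) in Delta_J, f = iota g in Y1\<close>
    and st: "s \<in> J" "t \<in> J" "s \<le> t"
  shows "\<forall>\<omega>\<in>space M. (\<forall>r. \<exists>n. r < Ts n \<omega>) \<longrightarrow>
    (let X = (\<lambda>n. xs n \<omega>); T = (\<lambda>n. Ts n \<omega>); f = \<iota> g;
         V = (\<lambda>\<epsilon> u. Vop \<Gamma>s D X T \<epsilon> s u) in
     \<forall>\<epsilon>\<in>{0<..1}.
       V \<epsilon> t f =
         f + (LINT u:{s..t}|lborel. V \<epsilon> u (gen J (\<Gamma>s (xpath X T (tscale (1 / \<epsilon>) s u))) u f))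
           + (\<Sum>k\<in>{1..Ns T s (tscale (1 / \<epsilon>) s t)}.
                Lim (at_left (Tkse T \<epsilon> s k)) (\<lambda>u. V \<epsilon> u (D \<epsilon> (xks X T s (k - 1)) (xks X T s k) f - f))))"
proof -
  have path: "random_evolution_path J \<iota> \<Gamma>s (\<lambda>n. Ts n \<omega>) \<epsilon> s t g"
    if "\<omega> \<in> space M" "\<forall>r. \<exists>n. r < Ts n \<omega>" "\<epsilon> \<in> {0<..1}" for \<omega> \<epsilon>
  proof
    show "Ts 0 \<omega> = 0" "\<And>n. Ts n \<omega> < Ts (Suc n) \<omega>"
      using MRP that(1) unfolding markov_renewal_def by auto
  qed (use J semigroup A0e(1) A0b A0c st that in auto)
  show ?thesis
    unfolding Let_def
    by (simp add: random_evolution_path.Vop_integral_identity[OF path])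
qed

end
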